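(* For every $d\in\mathbb N$, the Hamming graph $H(d,3)$ has no quantum symmetry, i.e. $C(G_{aut}^+(H(d,3)))$ is commutative.
   Context: The Hamming graph $H(d,q)$ has vertex set $\{1,\dots,q\}^d$, two vertices being adjacent iff they differ in exactly one coordinate. For a finite simple undirected graph $\Gamma=(V,E)$ with $V=\{1,\dots,n\}$, $C(G_{aut}^+(\Gamma))$ is the universal unital $C^*$-algebra generated by $u_{ij}$, $1\le i,j\le n$, with relations: (R1) $u_{ij}=u_{ij}^*=u_{ij}^2$; (R2) $\sum_{l} u_{il}=1=\sum_{l} u_{li}$ for all $i$; (R3) $u_{ij}u_{kl}=u_{kl}u_{ij}=0$ whenever exactly one of $(i,k)\in E$, $(j,l)\in E$ holds. $\Gamma$ has no quantum symmetry if $C(G_{aut}^+(\Gamma))$ is commutative. *)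

theory Defs
  imports Complex_Main
begin

text \<open>Complex scalar multiplication is \<open>scaleC\<close>; the inherited real
  scalar multiplication is its restriction to real scalars.\<close>

class cstar_algebra = real_normed_algebra_1 + banach +
  fixes scaleC :: "complex \<Rightarrow> 'a \<Rightarrow> 'a"
    and adj :: "'a \<Rightarrow> 'a"
  assumes scaleC_add_right: "scaleC c (x + y) = scaleC c x + scaleC c y"
    and scaleC_add_left: "scaleC (b + c) x = scaleC b x + scaleC c x"
    and scaleC_scaleC: "scaleC b (scaleC c x) = scaleC (b * c) x"
    and scaleC_one: "scaleC 1 x = x"
    and scaleR_scaleC: "scaleR r x = scaleC (complex_of_real r) x"
    and norm_scaleC: "norm (scaleC c x) = cmod c * norm x"
    and mult_scaleC_left: "scaleC c x * y = scaleC c (x * y)"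
    and mult_scaleC_right: "x * scaleC c y = scaleC c (x * y)"
    and adj_adj: "adj (adj x) = x"
    and adj_add: "adj (x + y) = adj x + adj y"
    and adj_scaleC: "adj (scaleC c x) = scaleC (cnj c) (adj x)"
    and adj_mult: "adj (x * y) = adj y * adj x"
    and cstar_identity: "norm (adj x * x) = (norm x)\<^sup>2"

text \<open>\<open>qaut_rel V E u\<close>: the family \<open>u i j\<close> (i, j in the finite vertex set V) of elements
  of a C*-algebra satisfies the defining relations (R1)-(R3) of C(G_aut^+(Gamma)),
  where Gamma = (V, E) and E is the (symmetric, irreflexive) adjacency relation.\<close>

definition qaut_rel :: "'v set \<Rightarrow> ('v \<Rightarrow> 'v \<Rightarrow> bool) \<Rightarrow> ('v \<Rightarrow> 'v \<Rightarrow> 'a::cstar_algebra) \<Rightarrow> bool" where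
  "qaut_rel V E u \<longleftrightarrow>
     (\<forall>i\<in>V. \<forall>j\<in>V. adj (u i j) = u i j \<and> u i j * u i j = u i j) \<and>
     (\<forall>i\<in>V. (\<Sum>l\<in>V. u i l) = 1 \<and> (\<Sum>l\<in>V. u l i) = 1) \<and>
     (\<forall>i\<in>V. \<forall>j\<in>V. \<forall>k\<in>V. \<forall>l\<in>V. (E i k \<noteq> E j l) \<longrightarrow>
         u i j * u k l = 0 \<and> u k l * u i j = 0)"

definition hamming_vertices :: "nat \<Rightarrow> nat \<Rightarrow> nat list set" where
  "hamming_vertices d q = {x. length x = d \<and> set x \<subseteq> {1..q}}"

definition hamming_adj :: "nat \<Rightarrow> nat \<Rightarrow> nat list \<Rightarrow> nat list \<Rightarrow> bool" where
  "hamming_adj d q x y \<longleftrightarrow>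
     x \<in> hamming_vertices d q \<and> y \<in> hamming_vertices d q \<and>
     card {i. i < d \<and> x ! i \<noteq> y ! i} = 1"

end

theory Submission
  imports Defs
begin

(* Every edge of H(d,3) lies in exactly one triangle, and two vertices at distance two have
   exactly two common neighbours.  If i ~ k and j ~ l, with triangles i k i' and j l j', the
   relations give a b = a c b and a c = a b c for a = u i j, b = u k l, c = u i' j' (and the same
   for every permutation of a, b, c); by the C*-identity, applied to a b (1 - c), this forces
   a b = a c, and then a and b commute.  For k farther from i one inducts on the Hamming
   distance of k from i: pick two neighbours p1, p2 of k closer to i, whose second common
   neighbour v is closer to i too.  Sandwiching between u p1 q1 and u p2 q2 and expanding along
   a row and a column trades u k l for some u v w, which commutes with u i j by induction. *)

section \<open>Projections in C*-algebras\<close>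

definition projection :: "'a::cstar_algebra \<Rightarrow> bool" where
  "projection p \<longleftrightarrow> adj p = p \<and> p * p = p"

lemma adj_zero: "adj (0::'a::cstar_algebra) = 0"
  using adj_add[of "0::'a" 0] by simp

lemma adj_diff: "adj ((x::'a::cstar_algebra) - y) = adj x - adj y"
  using adj_add[of "x - y" y] by (simp add: algebra_simps)

lemma adj_one: "adj (1::'a::cstar_algebra) = 1"
  using adj_mult[of "adj 1" "1::'a"] by (simp add: adj_adj)

lemma mult_adj_self_eq_zero_iff: "(x::'a::cstar_algebra) * adj x = 0 \<longleftrightarrow> x = 0"
proof
  assume "x * adj x = 0"
  then have "norm (adj x) ^ 2 = 0"
    using cstar_identity[of "adj x"] by (simp add: adj_adj)
  then show "x = 0"
    using adj_adj[of x] by (simp add: adj_zero)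
qed (simp add: adj_zero)

lemma projection_absorb_eq:
  fixes a b c :: "'a::cstar_algebra"
  assumes pa: "projection a" and pb: "projection b" and pc: "projection c"
    and abs_c: "a * b = a * c * b" and abs_b: "a * c = a * b * c"
  shows "a * b = a * c"
proof -
  have bb: "b * b = b" and cc: "c * c = c" and sa: "adj a = a" and sb: "adj b = b" and sc: "adj c = c"
    using pa pb pc unfolding projection_def by auto
  have abcb: "a * b * c * b = a * b"
    using abs_b abs_c by simp
  define z where "z = a * b * (1 - c)"
  have "z * adj z = a * b * ((1 - c) * (1 - c)) * b * a"
    by (simp add: z_def adj_mult adj_diff adj_one sa sb sc mult.assoc)
  also have "\<dots> = (a * b * b - a * b * c * b) * a"
    using cc by (simp add: algebra_simps)
  also have "\<dots> = 0"
    using abcb bb by (simp add: mult.assoc)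
  finally have "z = 0"
    by (simp add: mult_adj_self_eq_zero_iff)
  then show ?thesis
    using abs_b cc by (simp add: z_def algebra_simps)
qed

lemma projections_commute_of_absorb:
  fixes a b c :: "'a::cstar_algebra"
  assumes pa: "projection a" and pb: "projection b" and pc: "projection c"
    and "a * b = a * c * b" "a * c = a * b * c"
    and "b * a = b * c * a" "b * c = b * a * c"
    and "c * a = c * b * a" "c * b = c * a * b"
  shows "a * b = b * a"
proof -
  have ab: "a * b = a * c" and ba: "b * a = b * c" and ca: "c * a = c * b"
    using projection_absorb_eq assms by metis+
  have sa: "adj a = a" and sb: "adj b = b" and sc: "adj c = c"
    using pa pb pc unfolding projection_def by auto
  have "a * c = adj (c * a)"
    by (simp add: adj_mult sa sc)
  also have "\<dots> = adj (c * b)"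
    by (simp add: ca)
  also have "\<dots> = b * c"
    by (simp add: adj_mult sb sc)
  finally show ?thesis
    using ab ba by simp
qed

lemma mult_commute_on_right_factor:
  fixes a b c f :: "'a::semigroup_mult"
  assumes af: "a * f = f * a" and bf: "b * f = f * b" and cf: "c * f = f * c"
    and ac: "a * c = c * a" and fb: "f * b = f * c"
  shows "a * b * f = b * a * f"
proof -
  have "a * b * f = a * (c * f)"
    using bf fb cf by (simp add: mult.assoc)
  also have "\<dots> = c * (f * a)"
    using ac af by (metis mult.assoc)
  also have "\<dots> = b * a * f"
    using cf fb bf af by (metis mult.assoc)
  finally show ?thesis .
qed

section \<open>Quantum automorphisms of graphs with \<lambda> = 1 and \<mu> = 2\<close>

definition common_neighbours :: "('v \<Rightarrow> 'v \<Rightarrow> bool) \<Rightarrow> 'v \<Rightarrow> 'v \<Rightarrow> 'v set" where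
  "common_neighbours E x z = {y. E x y \<and> E y z}"

(* \<lambda> and \<mu> are the usual names of the numbers of common neighbours of adjacent vertices and of
   vertices at distance two, as for strongly regular graphs. *)
locale lambda1_mu2_graph =
  fixes V :: "'v set" and E :: "'v \<Rightarrow> 'v \<Rightarrow> bool"
  assumes finite_vertices: "finite V"
    and adj_in_vertices: "E x y \<Longrightarrow> x \<in> V"
    and adj_sym: "E x y \<Longrightarrow> E y x"
    and adj_irrefl: "\<not> E x x"
    and edge_in_unique_triangle: "E x z \<Longrightarrow> \<exists>r. common_neighbours E x z = {r}"
    and two_common_neighbours:
      "x \<noteq> z \<Longrightarrow> \<not> E x z \<Longrightarrow> l \<in> common_neighbours E x z \<Longrightarrow>
        \<exists>w. w \<noteq> l \<and> common_neighbours E x z = {l, w}"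
    and separating_neighbour:
      "x \<in> V \<Longrightarrow> y \<in> V \<Longrightarrow> x \<noteq> y \<Longrightarrow> \<not> E x y \<Longrightarrow> \<exists>r. E x r \<and> \<not> E y r"
begin

lemma adj_in_vertices': "E x y \<Longrightarrow> y \<in> V"
  using adj_in_vertices adj_sym by blast

lemma common_neighbours_subset: "common_neighbours E x z \<subseteq> V"
  unfolding common_neighbours_def using adj_in_vertices by blast

lemma common_neighbours_triangle:
  assumes "E x z" "E x r" "E r z"
  shows "common_neighbours E x z = {r}"
proof -
  obtain r' where "common_neighbours E x z = {r'}"
    using edge_in_unique_triangle assms(1) by blast
  moreover have "r \<in> common_neighbours E x z"
    unfolding common_neighbours_def using assms by blast
  ultimately show ?thesis
    by auto
qed

end

lemma qaut_rel_transpose: "qaut_rel V E u \<Longrightarrow> qaut_rel V E (\<lambda>i j. u j i)"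
  unfolding qaut_rel_def by (simp add: conj_commute)

locale qaut_lambda1_mu2 = lambda1_mu2_graph V E for V :: "'v set" and E +
  fixes u :: "'v \<Rightarrow> 'v \<Rightarrow> 'a::cstar_algebra"
  assumes qaut_rel: "qaut_rel V E u"
begin

lemma transpose: "qaut_lambda1_mu2 V E (\<lambda>i j. u j i)"
  using lambda1_mu2_graph_axioms qaut_rel_transpose[OF qaut_rel]
  by (rule qaut_lambda1_mu2.intro[OF _ qaut_lambda1_mu2_axioms.intro])

lemma projection_entry: "x \<in> V \<Longrightarrow> y \<in> V \<Longrightarrow> projection (u x y)"
  using qaut_rel unfolding qaut_rel_def projection_def by blast

lemma row_sum: "x \<in> V \<Longrightarrow> (\<Sum>y\<in>V. u x y) = 1"
  using qaut_rel unfolding qaut_rel_def by blast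

lemma column_sum: "y \<in> V \<Longrightarrow> (\<Sum>x\<in>V. u x y) = 1"
  using qaut_rel unfolding qaut_rel_def by blast

lemma entry_mult_eq_zero:
  "x \<in> V \<Longrightarrow> y \<in> V \<Longrightarrow> z \<in> V \<Longrightarrow> w \<in> V \<Longrightarrow> E x z \<noteq> E y w \<Longrightarrow> u x y * u z w = 0"
  using qaut_rel unfolding qaut_rel_def by blast

lemma mult_eq_sum_column: "q \<in> V \<Longrightarrow> A * B = (\<Sum>p\<in>V. A * u p q * B)"
  by (simp add: column_sum flip: sum_distrib_left sum_distrib_right)

lemma eq_double_sum_rows:
  assumes "x1 \<in> V" "x2 \<in> V"
  shows "X = (\<Sum>q1\<in>V. \<Sum>q2\<in>V. u x1 q1 * X * u x2 q2)"
proof -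
  have "X = (\<Sum>q1\<in>V. u x1 q1) * X * (\<Sum>q2\<in>V. u x2 q2)"
    using assms by (simp add: row_sum)
  also have "\<dots> = (\<Sum>q1\<in>V. \<Sum>q2\<in>V. u x1 q1 * X * u x2 q2)"
    by (simp add: sum_distrib_left sum_distrib_right, rule sum.swap)
  finally show ?thesis .
qed

lemma row_orthogonal:
  assumes x: "x \<in> V" and y: "y1 \<in> V" "y2 \<in> V" "y1 \<noteq> y2"
  shows "u x y1 * u x y2 = 0"
proof (cases "E y1 y2")
  case True
  then show ?thesis
    using entry_mult_eq_zero x y adj_irrefl by metis
next
  case False
  then obtain r where r: "E y1 r" "\<not> E y2 r"
    using separating_neighbour y by blast
  have "u x y1 * u x y2 = (\<Sum>p\<in>V. u x y1 * u p r * u x y2)"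
    using r adj_in_vertices' by (blast intro: mult_eq_sum_column)
  also have "\<dots> = 0"
  proof (intro sum.neutral ballI)
    fix p assume p: "p \<in> V"
    show "u x y1 * u p r * u x y2 = 0"
    proof (cases "E x p")
      case True
      then have "u p r * u x y2 = 0"
        using entry_mult_eq_zero[OF p _ x y(2)] r adj_sym adj_in_vertices' by metis
      then show ?thesis
        by (simp add: mult.assoc)
    next
      case False
      then have "u x y1 * u p r = 0"
        using entry_mult_eq_zero[OF x y(1) p] r adj_in_vertices' by metis
      then show ?thesis
        by simp
    qed
  qed
  finally show ?thesis .
qed

lemma column_orthogonal:
  "x1 \<in> V \<Longrightarrow> x2 \<in> V \<Longrightarrow> y \<in> V \<Longrightarrow> x1 \<noteq> x2 \<Longrightarrow> u x1 y * u x2 y = 0"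
  using qaut_lambda1_mu2.row_orthogonal[OF transpose] .

lemma mult_eq_sum_common_neighbours:
  assumes V: "x \<in> V" "y \<in> V" "z \<in> V" "w \<in> V" and s: "E y s" "E s w"
  shows "u x y * u z w = (\<Sum>p\<in>common_neighbours E x z. u x y * u p s * u z w)"
proof -
  have "u x y * u z w = (\<Sum>p\<in>V. u x y * u p s * u z w)"
    using s adj_in_vertices' by (blast intro: mult_eq_sum_column)
  also have "\<dots> = (\<Sum>p\<in>common_neighbours E x z. u x y * u p s * u z w)"
  proof (rule sum.mono_neutral_right[OF finite_vertices common_neighbours_subset], rule ballI)
    fix p assume p: "p \<in> V - common_neighbours E x z"
    show "u x y * u p s * u z w = 0"
    proof (cases "E x p")
      case True
      then have "u p s * u z w = 0"
        using p s entry_mult_eq_zero[of p s z w] V adj_in_vertices' unfolding common_neighbours_def by blast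
      then show ?thesis
        by (simp add: mult.assoc)
    next
      case False
      then have "u x y * u p s = 0"
        using p s entry_mult_eq_zero[of x y p s] V adj_in_vertices' by blast
      then show ?thesis
        by simp
    qed
  qed
  finally show ?thesis .
qed

lemma mult_eq_sum_common_neighbours':
  "x \<in> V \<Longrightarrow> y \<in> V \<Longrightarrow> z \<in> V \<Longrightarrow> w \<in> V \<Longrightarrow> E x r \<Longrightarrow> E r z \<Longrightarrow>
    u x y * u z w = (\<Sum>q\<in>common_neighbours E y w. u x y * u r q * u z w)"
  using qaut_lambda1_mu2.mult_eq_sum_common_neighbours[OF transpose] .

lemma mult_absorb_triangle:
  assumes "E x z" "E x r" "E r z" "E y w" "E y s" "E s w"
  shows "u x y * u z w = u x y * u r s * u z w"
  using mult_eq_sum_common_neighbours[of x y z w s] common_neighbours_triangle[of x z r] assms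
    adj_in_vertices adj_in_vertices' by simp

lemma commute_if_adj:
  assumes ik: "E i k" and V: "j \<in> V" "l \<in> V"
  shows "u i j * u k l = u k l * u i j"
proof (cases "E j l")
  case False
  then show ?thesis
    using entry_mult_eq_zero V ik adj_sym adj_in_vertices adj_in_vertices' by metis
next
  case True
  obtain i' where i': "E i i'" "E i' k"
    using edge_in_unique_triangle[OF ik] unfolding common_neighbours_def by blast
  obtain j' where j': "E j j'" "E j' l"
    using edge_in_unique_triangle[OF True] unfolding common_neighbours_def by blast
  have "projection (u i j)" "projection (u k l)" "projection (u i' j')"
    using i' j' V adj_in_vertices adj_in_vertices' projection_entry by blast+
  moreover have "E k i" "E i' i" "E k i'" "E l j" "E j' j" "E l j'"
    using ik i' j' True adj_sym by blast+
  ultimately show ?thesis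
    using ik i' j' True
    by (intro projections_commute_of_absorb[of _ _ "u i' j'"] mult_absorb_triangle) assumption+
qed

lemma transfer_to_other_common_neighbour:
  assumes k: "E k p1" "E k p2" and p: "p1 \<noteq> p2" "\<not> E p1 p2"
    and q: "q1 \<in> V" "q2 \<in> V" and l: "l \<in> V"
  shows "u p1 q1 * u p2 q2 * u k l = 0 \<or>
    (\<exists>v\<in>common_neighbours E p1 p2 - {k}. \<exists>w\<in>V.
      u p1 q1 * u p2 q2 * u k l = u p1 q1 * u p2 q2 * u v w)"
proof -
  have V: "p1 \<in> V" "p2 \<in> V" "k \<in> V"
    using k adj_in_vertices adj_in_vertices' by blast+
  define e1 e2 where "e1 = u p1 q1" and "e2 = u p2 q2"
  have commute_e2: "u x y * e2 = e2 * u x y" if "E x p2" "y \<in> V" for x y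
    unfolding e2_def using commute_if_adj[OF that q(2)] .
  consider "\<not> E q1 l" | "\<not> E q2 l" | "q1 = q2 \<or> E q1 q2"
    | "l \<in> common_neighbours E q1 q2" "q1 \<noteq> q2" "\<not> E q1 q2"
    unfolding common_neighbours_def using adj_sym by blast
  then show ?thesis
  proof cases
    case 1
    then have "e1 * u k l = 0"
      unfolding e1_def using entry_mult_eq_zero[OF V(1) q(1) V(3) l] k(1) adj_sym by blast
    moreover have "e1 * e2 * u k l = e1 * u k l * e2"
      using commute_e2[OF k(2) l] by (simp add: mult.assoc)
    ultimately show ?thesis
      by (simp add: e1_def e2_def)
  next
    case 2
    then have "e2 * u k l = 0"
      unfolding e2_def using entry_mult_eq_zero[OF V(2) q(2) V(3) l] k(2) adj_sym by blast
    then show ?thesis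
      by (simp add: e1_def e2_def mult.assoc)
  next
    case 3
    then have "e1 * e2 = 0"
      unfolding e1_def e2_def using column_orthogonal entry_mult_eq_zero V q p by metis
    then show ?thesis
      by (simp add: e1_def e2_def)
  next
    case 4
    then obtain w where w: "w \<noteq> l" "common_neighbours E q1 q2 = {l, w}"
      using two_common_neighbours by blast
    have "k \<in> common_neighbours E p1 p2"
      unfolding common_neighbours_def using k adj_sym by blast
    then obtain v where v: "v \<noteq> k" "common_neighbours E p1 p2 = {k, v}"
      using two_common_neighbours p by blast
    have wV: "w \<in> V" and vV: "v \<in> V" and vp: "E v p2"
      using w(2) v(2) common_neighbours_subset unfolding common_neighbours_def by blast+
    (* Expand e1 * e2 along row k, where only the common neighbours l, w of q1, q2 contribute,
       and along column w, where only the common neighbours k, v of p1, p2 contribute. *)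
    have "e1 * e2 = e1 * u k l * e2 + e1 * u k w * e2"
      using mult_eq_sum_common_neighbours'[OF V(1) q(1) V(2) q(2) k(1)[THEN adj_sym] k(2)] w
      by (simp add: e1_def e2_def)
    also have "\<dots> = e1 * e2 * u k l + e1 * e2 * u k w"
      using commute_e2[OF k(2) l] commute_e2[OF k(2) wV] by (simp add: mult.assoc)
    finally have row: "e1 * e2 = e1 * e2 * u k l + e1 * e2 * u k w" .
    have "w \<in> common_neighbours E q1 q2"
      using w(2) by blast
    then have "e1 * e2 = e1 * u k w * e2 + e1 * u v w * e2"
      using mult_eq_sum_common_neighbours[OF V(1) q(1) V(2) q(2), of w] v
      unfolding common_neighbours_def by (simp add: e1_def e2_def)
    also have "\<dots> = e1 * e2 * u k w + e1 * e2 * u v w"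
      using commute_e2[OF k(2) wV] commute_e2[OF vp wV] by (simp add: mult.assoc)
    finally have "e1 * e2 * u k l = e1 * e2 * u v w"
      using row by (metis add.commute add_left_cancel)
    then show ?thesis
      using v wV unfolding e1_def e2_def by blast
  qed
qed

lemma commute_via_common_neighbours:
  assumes V: "i \<in> V" "j \<in> V" "l \<in> V"
    and k: "E k p1" "E k p2" and p: "p1 \<noteq> p2" "\<not> E p1 p2"
    and comm: "\<And>x y. x \<in> {p1, p2} \<union> (common_neighbours E p1 p2 - {k}) \<Longrightarrow> y \<in> V \<Longrightarrow>
      u i j * u x y = u x y * u i j"
  shows "u i j * u k l = u k l * u i j"
proof -
  have pV: "p1 \<in> V" "p2 \<in> V"
    using k adj_in_vertices' by blast+
  have "u p1 q1 * (u i j * u k l) * u p2 q2 = u p1 q1 * (u k l * u i j) * u p2 q2"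
    if q: "q1 \<in> V" "q2 \<in> V" for q1 q2
  proof -
    define a b f where "a = u i j" and "b = u k l" and "f = u p1 q1 * u p2 q2"
    have ae: "a * u p1 q1 = u p1 q1 * a" "a * u p2 q2 = u p2 q2 * a"
      unfolding a_def using comm q by blast+
    have be: "b * u p1 q1 = u p1 q1 * b" "b * u p2 q2 = u p2 q2 * b"
      unfolding b_def using commute_if_adj k V q by blast+
    have af: "a * f = f * a" and bf: "b * f = f * b"
      unfolding f_def using ae be by (metis mult.assoc)+
    have "a * b * f = b * a * f"
      using transfer_to_other_common_neighbour[OF k p q V(3)]
    proof (elim disjE bexE)
      assume "u p1 q1 * u p2 q2 * u k l = 0"
      then show ?thesis
        using mult_commute_on_right_factor[OF af bf, of 0] by (simp add: f_def b_def)
    next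
      fix v w assume v: "v \<in> common_neighbours E p1 p2 - {k}" and w: "w \<in> V"
        and fb: "u p1 q1 * u p2 q2 * u k l = u p1 q1 * u p2 q2 * u v w"
      have "E v p1" "E v p2"
        using v adj_sym unfolding common_neighbours_def by blast+
      then have "u v w * u p1 q1 = u p1 q1 * u v w" "u v w * u p2 q2 = u p2 q2 * u v w"
        using commute_if_adj w q by blast+
      then have "u v w * f = f * u v w"
        unfolding f_def by (metis mult.assoc)
      moreover have "a * u v w = u v w * a"
        unfolding a_def using comm v w by blast
      ultimately show ?thesis
        using mult_commute_on_right_factor[OF af bf] fb by (simp add: f_def b_def)
    qed
    then show ?thesis
      using ae(1) be(1) unfolding a_def b_def f_def by (metis mult.assoc)
  qed
  then show ?thesis
    using eq_double_sum_rows[OF pV, of "u i j * u k l"] eq_double_sum_rows[OF pV, of "u k l * u i j"]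
    by (metis (no_types, lifting) sum.cong)
qed

end

section \<open>The Hamming graph H(d, 3)\<close>

lemma hamming_vertices_iff:
  "x \<in> hamming_vertices d q \<longleftrightarrow> length x = d \<and> (\<forall>t<d. x ! t \<in> {1..q})"
  unfolding hamming_vertices_def by (auto simp: set_conv_nth)

lemma hamming_vertices_eqI:
  "x \<in> hamming_vertices d q \<Longrightarrow> y \<in> hamming_vertices d q \<Longrightarrow>
    (\<And>t. t < d \<Longrightarrow> x ! t = y ! t) \<Longrightarrow> x = y"
  unfolding hamming_vertices_iff by (metis nth_equalityI)

lemma list_update_in_hamming_vertices:
  "x \<in> hamming_vertices d q \<Longrightarrow> v \<in> {1..q} \<Longrightarrow> x[s := v] \<in> hamming_vertices d q"
  unfolding hamming_vertices_iff by (metis length_list_update nth_list_update_eq nth_list_update_neq)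

lemma finite_hamming_vertices: "finite (hamming_vertices d q)"
  using finite_lists_length_eq[of "{1..q}" d]
  unfolding hamming_vertices_def by (simp add: conj_commute)

lemma hamming_adj_iff:
  "hamming_adj d q x y \<longleftrightarrow> x \<in> hamming_vertices d q \<and> y \<in> hamming_vertices d q \<and>
    (\<exists>s<d. x ! s \<noteq> y ! s \<and> (\<forall>t<d. t \<noteq> s \<longrightarrow> x ! t = y ! t))"
proof -
  have "card {t. t < d \<and> x ! t \<noteq> y ! t} = 1 \<longleftrightarrow> (\<exists>s. {t. t < d \<and> x ! t \<noteq> y ! t} = {s})"
    by (simp add: card_1_singleton_iff)
  also have "\<dots> \<longleftrightarrow> (\<exists>s<d. x ! s \<noteq> y ! s \<and> (\<forall>t<d. t \<noteq> s \<longrightarrow> x ! t = y ! t))"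
    by (auto simp: set_eq_iff)
  finally show ?thesis
    unfolding hamming_adj_def by blast
qed

lemma hamming_adj_list_update:
  assumes "x \<in> hamming_vertices d q" "s < d" "v \<in> {1..q}" "v \<noteq> x ! s"
  shows "hamming_adj d q x (x[s := v])"
  using assms list_update_in_hamming_vertices[OF assms(1,3)]
  unfolding hamming_adj_iff by (auto simp: hamming_vertices_iff)

lemma hamming_common_neighbours_two_coords:
  assumes V: "x \<in> hamming_vertices d q" "y \<in> hamming_vertices d q"
    and st: "s < d" "t < d" "s \<noteq> t" "x ! s \<noteq> y ! s" "x ! t \<noteq> y ! t"
    and agree: "\<forall>r<d. r \<noteq> s \<and> r \<noteq> t \<longrightarrow> x ! r = y ! r"
  shows "common_neighbours (hamming_adj d q) x y = {x[s := y ! s], x[t := y ! t]}"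
proof
  have len: "length x = d"
    using V(1) by (simp add: hamming_vertices_iff)
  show "common_neighbours (hamming_adj d q) x y \<subseteq> {x[s := y ! s], x[t := y ! t]}"
  proof
    fix z assume "z \<in> common_neighbours (hamming_adj d q) x y"
    then obtain a b where
      a: "a < d" "x ! a \<noteq> z ! a" "\<forall>r<d. r \<noteq> a \<longrightarrow> x ! r = z ! r" and
      b: "b < d" "z ! b \<noteq> y ! b" "\<forall>r<d. r \<noteq> b \<longrightarrow> z ! r = y ! r" and
      zV: "z \<in> hamming_vertices d q"
      unfolding common_neighbours_def hamming_adj_iff by blast
    have "a = s \<and> b = t \<or> a = t \<and> b = s"
      using st a b by metis
    then have "\<forall>r<d. z ! r = x[a := y ! a] ! r" and "a = s \<or> a = t"
      using a b st len by (auto simp: nth_list_update)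
    then show "z \<in> {x[s := y ! s], x[t := y ! t]}"
      using hamming_vertices_eqI[OF zV list_update_in_hamming_vertices[OF V(1)]] V(2) st
      by (fastforce simp: hamming_vertices_iff)
  qed
  have "x[a := y ! a] \<in> common_neighbours (hamming_adj d q) x y"
    if "a < d" "b < d" "a \<noteq> b" "x ! a \<noteq> y ! a" "x ! b \<noteq> y ! b"
      "\<forall>r<d. r \<noteq> a \<and> r \<noteq> b \<longrightarrow> x ! r = y ! r" for a b
  proof -
    have "y ! a \<in> {1..q}"
      using V(2) that(1) by (simp add: hamming_vertices_iff)
    then have "hamming_adj d q x (x[a := y ! a])"
      using hamming_adj_list_update[OF V(1) that(1)] that(4) by metis
    moreover have "hamming_adj d q (x[a := y ! a]) y"
      unfolding hamming_adj_iff
      using that V list_update_in_hamming_vertices[OF V(1) \<open>y ! a \<in> {1..q}\<close>] len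
      by (auto simp: nth_list_update intro!: exI[of _ b])
    ultimately show ?thesis
      unfolding common_neighbours_def by blast
  qed
  then show "{x[s := y ! s], x[t := y ! t]} \<subseteq> common_neighbours (hamming_adj d q) x y"
    using st agree by blast
qed

lemma hamming_distance_two:
  assumes xl: "hamming_adj d q x l" and lz: "hamming_adj d q l z"
    and "x \<noteq> z" "\<not> hamming_adj d q x z"
  obtains s t where "s < d" "t < d" "s \<noteq> t" "x ! s \<noteq> z ! s" "x ! t \<noteq> z ! t"
    "\<forall>r<d. r \<noteq> s \<and> r \<noteq> t \<longrightarrow> x ! r = z ! r"
proof -
  obtain s where s: "s < d" "x ! s \<noteq> l ! s" "\<forall>r<d. r \<noteq> s \<longrightarrow> x ! r = l ! r"
    using xl unfolding hamming_adj_iff by blast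
  obtain t where t: "t < d" "l ! t \<noteq> z ! t" "\<forall>r<d. r \<noteq> t \<longrightarrow> l ! r = z ! r"
    using lz unfolding hamming_adj_iff by blast
  have V: "x \<in> hamming_vertices d q" "z \<in> hamming_vertices d q"
    using xl lz unfolding hamming_adj_def by blast+
  have "s \<noteq> t"
  proof
    assume "s = t"
    then have "\<forall>r<d. r \<noteq> s \<longrightarrow> x ! r = z ! r"
      using s t by metis
    then show False
      using assms(3,4) V hamming_vertices_eqI[OF V] unfolding hamming_adj_iff by metis
  qed
  then show ?thesis
    using that s t by metis
qed

lemma hamming_two_common_neighbours:
  assumes "x \<noteq> z" "\<not> hamming_adj d q x z" "l \<in> common_neighbours (hamming_adj d q) x z"
  shows "\<exists>w. w \<noteq> l \<and> common_neighbours (hamming_adj d q) x z = {l, w}"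
proof -
  have xl: "hamming_adj d q x l" and lz: "hamming_adj d q l z"
    using assms(3) unfolding common_neighbours_def by blast+
  then have V: "x \<in> hamming_vertices d q" "z \<in> hamming_vertices d q"
    unfolding hamming_adj_def by blast+
  obtain s t where st: "s < d" "t < d" "s \<noteq> t" "x ! s \<noteq> z ! s" "x ! t \<noteq> z ! t"
    "\<forall>r<d. r \<noteq> s \<and> r \<noteq> t \<longrightarrow> x ! r = z ! r"
    using hamming_distance_two[OF xl lz assms(1,2)] .
  have "x[s := z ! s] ! s \<noteq> x[t := z ! t] ! s"
    using st V(1) by (simp add: hamming_vertices_iff)
  then have "x[s := z ! s] \<noteq> x[t := z ! t]"
    by metis
  then show ?thesis
    using hamming_common_neighbours_two_coords[OF V st] assms(3)
    by (intro exI[of _ "if l = x[s := z ! s] then x[t := z ! t] else x[s := z ! s]"]) auto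
qed

lemma third_value_exists:
  assumes "3 \<le> q"
  shows "\<exists>c\<in>{1..q}. c \<noteq> a \<and> c \<noteq> (b::nat)"
proof -
  have "\<exists>c\<in>{1, 2, 3}. c \<noteq> a \<and> c \<noteq> b"
    by auto
  then show ?thesis
    using assms by auto
qed

lemma third_value_unique:
  fixes a b c c' :: nat
  assumes "{a, b, c, c'} \<subseteq> {1..3}" "a \<noteq> b" "c \<notin> {a, b}" "c' \<notin> {a, b}"
  shows "c = c'"
  using assms by auto

lemma hamming_common_neighbour_of_adj:
  assumes s: "s < d" "x ! s \<noteq> z ! s" "\<forall>t<d. t \<noteq> s \<longrightarrow> x ! t = z ! t"
    and p: "p \<in> common_neighbours (hamming_adj d q) x z"
  shows "(\<forall>t<d. t \<noteq> s \<longrightarrow> p ! t = x ! t) \<and> p ! s \<noteq> x ! s \<and> p ! s \<noteq> z ! s"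
proof -
  obtain a where a: "a < d" "x ! a \<noteq> p ! a" "\<forall>t<d. t \<noteq> a \<longrightarrow> x ! t = p ! t"
    using p unfolding common_neighbours_def hamming_adj_iff by blast
  obtain b where b: "b < d" "p ! b \<noteq> z ! b" "\<forall>t<d. t \<noteq> b \<longrightarrow> p ! t = z ! t"
    using p unfolding common_neighbours_def hamming_adj_iff by blast
  have "a = s"
    using s a b by metis
  moreover have "p ! s \<noteq> z ! s"
    using s a b \<open>a = s\<close> by metis
  ultimately show ?thesis
    using a by metis
qed

lemma hamming3_edge_in_unique_triangle:
  assumes "hamming_adj d 3 x z"
  shows "\<exists>r. common_neighbours (hamming_adj d 3) x z = {r}"
proof -
  obtain s where s: "s < d" "x ! s \<noteq> z ! s" "\<forall>t<d. t \<noteq> s \<longrightarrow> x ! t = z ! t"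
    and V: "x \<in> hamming_vertices d 3" "z \<in> hamming_vertices d 3"
    using assms unfolding hamming_adj_iff by blast
  have xz: "x ! s \<in> {1..3}" "z ! s \<in> {1..3}" and len: "length x = d"
    using V s(1) by (simp_all add: hamming_vertices_iff)
  obtain c where c: "c \<in> {1..3}" "c \<noteq> x ! s" "c \<noteq> z ! s"
    using third_value_exists[of 3 "x ! s" "z ! s"] by auto
  have rV: "x[s := c] \<in> hamming_vertices d 3"
    using list_update_in_hamming_vertices[OF V(1) c(1)] .
  have "hamming_adj d 3 x (x[s := c])"
    using hamming_adj_list_update[OF V(1) s(1) c(1)] c(2) by simp
  moreover have "hamming_adj d 3 (x[s := c]) z"
    unfolding hamming_adj_iff using rV V s c len by (auto simp: nth_list_update)
  ultimately have "x[s := c] \<in> common_neighbours (hamming_adj d 3) x z"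
    unfolding common_neighbours_def by blast
  moreover have "p = x[s := c]" if p: "p \<in> common_neighbours (hamming_adj d 3) x z" for p
  proof -
    have pV: "p \<in> hamming_vertices d 3"
      using p unfolding common_neighbours_def hamming_adj_def by blast
    have "p ! s \<in> {1..3}"
      using pV s(1) by (simp add: hamming_vertices_iff)
    then have "p ! s = c"
      using hamming_common_neighbour_of_adj[OF s p] third_value_unique[of "x ! s" "z ! s"] xz c s(2)
      by blast
    then have "p ! t = x[s := c] ! t" if "t < d" for t
      using hamming_common_neighbour_of_adj[OF s p] len that by (cases "t = s") auto
    then show ?thesis
      using hamming_vertices_eqI[OF pV rV] by blast
  qed
  ultimately show ?thesis
    by blast
qed

lemma hamming_separating_neighbour:
  assumes q: "3 \<le> q" and V: "x \<in> hamming_vertices d q" "y \<in> hamming_vertices d q"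
    and "x \<noteq> y" "\<not> hamming_adj d q x y"
  shows "\<exists>r. hamming_adj d q x r \<and> \<not> hamming_adj d q y r"
proof -
  obtain s where s: "s < d" "x ! s \<noteq> y ! s"
    using hamming_vertices_eqI[OF V] assms(4) by blast
  obtain c where c: "c \<in> {1..q}" "c \<noteq> x ! s" "c \<noteq> y ! s"
    using third_value_exists[OF q] by blast
  have len: "length x = d"
    using V(1) by (simp add: hamming_vertices_iff)
  have "hamming_adj d q x (x[s := c])"
    using hamming_adj_list_update[OF V(1) s(1) c(1)] c(2) by simp
  moreover have "\<not> hamming_adj d q y (x[s := c])"
  proof
    assume "hamming_adj d q y (x[s := c])"
    then obtain a where a: "a < d" "\<forall>t<d. t \<noteq> a \<longrightarrow> y ! t = x[s := c] ! t"
      unfolding hamming_adj_iff by blast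
    have "a = s"
      using a s c len by (metis nth_list_update_eq)
    then have "\<forall>t<d. t \<noteq> s \<longrightarrow> x ! t = y ! t"
      using a by simp
    then show False
      using assms(5) V s unfolding hamming_adj_iff by blast
  qed
  ultimately show ?thesis
    by blast
qed

lemma hamming_adj_sym: "hamming_adj d q x y \<Longrightarrow> hamming_adj d q y x"
  unfolding hamming_adj_iff by metis

lemma lambda1_mu2_graph_hamming3: "lambda1_mu2_graph (hamming_vertices d 3) (hamming_adj d 3)"
proof
  show "finite (hamming_vertices d 3)"
    by (rule finite_hamming_vertices)
  show "x \<in> hamming_vertices d 3" if "hamming_adj d 3 x y" for x y
    using that unfolding hamming_adj_def by blast
  show "hamming_adj d 3 y x" if "hamming_adj d 3 x y" for x y
    using hamming_adj_sym[OF that] .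
  show "\<not> hamming_adj d 3 x x" for x
    unfolding hamming_adj_iff by blast
qed (fact hamming3_edge_in_unique_triangle hamming_two_common_neighbours
    hamming_separating_neighbour[OF order_refl])+

definition diff_coords :: "nat \<Rightarrow> nat list \<Rightarrow> nat list \<Rightarrow> nat set" where
  "diff_coords d x y = {t. t < d \<and> x ! t \<noteq> y ! t}"

lemma finite_diff_coords: "finite (diff_coords d x y)"
  unfolding diff_coords_def by simp

lemma diff_coords_list_update:
  assumes "length k = d"
  shows "diff_coords d i (k[s := i ! s]) = diff_coords d i k - {s}"
proof -
  have "k[s := i ! s] ! t = (if t = s then i ! t else k ! t)" if "t < d" for t
    using assms that by (simp add: nth_list_update)
  then show ?thesis
    unfolding diff_coords_def by (auto split: if_splits)
qed

lemma hamming_closer_pair: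
  assumes i: "i \<in> hamming_vertices d q" and k: "k \<in> hamming_vertices d q"
    and far: "2 \<le> card (diff_coords d i k)"
  obtains p1 p2 where "hamming_adj d q k p1" "hamming_adj d q k p2" "p1 \<noteq> p2"
    "\<not> hamming_adj d q p1 p2"
    "\<And>x. x \<in> {p1, p2} \<union> (common_neighbours (hamming_adj d q) p1 p2 - {k}) \<Longrightarrow>
      card (diff_coords d i x) < card (diff_coords d i k)"
proof -
  obtain s t where st: "s \<in> diff_coords d i k" "t \<in> diff_coords d i k" "s \<noteq> t"
    using far finite_diff_coords card_le_Suc0_iff_eq[of "diff_coords d i k"] by force
  then have st': "s < d" "t < d" "i ! s \<noteq> k ! s" "i ! t \<noteq> k ! t"
    unfolding diff_coords_def by auto
  have len: "length k = d" and vals: "i ! s \<in> {1..q}" "i ! t \<in> {1..q}"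
    using i k st' by (simp_all add: hamming_vertices_iff)
  define p1 p2 v
    where "p1 = k[s := i ! s]" and "p2 = k[t := i ! t]" and "v = k[s := i ! s, t := i ! t]"
  have V: "p1 \<in> hamming_vertices d q" "p2 \<in> hamming_vertices d q"
    unfolding p1_def p2_def using list_update_in_hamming_vertices k vals by blast+
  have adj: "hamming_adj d q k p1" "hamming_adj d q k p2"
    unfolding p1_def p2_def using hamming_adj_list_update[OF k] st' vals by metis+
  have differ: "p1 ! s \<noteq> p2 ! s" "p1 ! t \<noteq> p2 ! t"
    "\<forall>r<d. r \<noteq> s \<and> r \<noteq> t \<longrightarrow> p1 ! r = p2 ! r"
    unfolding p1_def p2_def using st' st(3) len by auto
  then have p: "p1 \<noteq> p2" "\<not> hamming_adj d q p1 p2"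
    unfolding hamming_adj_iff using st' st(3) by metis+
  have "common_neighbours (hamming_adj d q) p1 p2 = {k, v}"
    using hamming_common_neighbours_two_coords[OF V st'(1,2) st(3) differ] st(3) st'(2) len
    by (simp add: p1_def p2_def v_def list_update_swap)
  then have "x \<in> {p1, p2, v}"
    if "x \<in> {p1, p2} \<union> (common_neighbours (hamming_adj d q) p1 p2 - {k})" for x
    using that by blast
  moreover have "diff_coords d i x \<subset> diff_coords d i k" if "x \<in> {p1, p2, v}" for x
    using that st len by (auto simp: p1_def p2_def v_def diff_coords_list_update)
  ultimately show ?thesis
    using that[OF adj p] finite_diff_coords psubset_card_mono by metis
qed

locale hamming3_qaut =
  fixes d :: nat and u :: "nat list \<Rightarrow> nat list \<Rightarrow> 'a::cstar_algebra"
  assumes qaut_rel_hamming3: "qaut_rel (hamming_vertices d 3) (hamming_adj d 3) u"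

sublocale hamming3_qaut \<subseteq> qaut_lambda1_mu2 "hamming_vertices d 3" "hamming_adj d 3" u
  using lambda1_mu2_graph_hamming3 qaut_rel_hamming3
  by (rule qaut_lambda1_mu2.intro[OF _ qaut_lambda1_mu2_axioms.intro])

lemma (in hamming3_qaut) commute_if_far:
  assumes i: "i \<in> hamming_vertices d 3" and j: "j \<in> hamming_vertices d 3"
    and k: "k \<in> hamming_vertices d 3" and l: "l \<in> hamming_vertices d 3"
    and far: "2 \<le> card (diff_coords d i k)"
    and closer_commute: "\<And>x y. card (diff_coords d i x) < card (diff_coords d i k) \<Longrightarrow>
      x \<in> hamming_vertices d 3 \<Longrightarrow> y \<in> hamming_vertices d 3 \<Longrightarrow> u i j * u x y = u x y * u i j"
  shows "u i j * u k l = u k l * u i j"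
proof -
  obtain p1 p2 where adj: "hamming_adj d 3 k p1" "hamming_adj d 3 k p2"
    and p: "p1 \<noteq> p2" "\<not> hamming_adj d 3 p1 p2"
    and closer: "\<And>x. x \<in> {p1, p2} \<union> (common_neighbours (hamming_adj d 3) p1 p2 - {k}) \<Longrightarrow>
      card (diff_coords d i x) < card (diff_coords d i k)"
    using hamming_closer_pair[OF i k far] by blast
  have "u i j * u x y = u x y * u i j"
    if x: "x \<in> {p1, p2} \<union> (common_neighbours (hamming_adj d 3) p1 p2 - {k})"
      and y: "y \<in> hamming_vertices d 3" for x y
  proof -
    have "x \<in> hamming_vertices d 3"
      using x adj adj_in_vertices' common_neighbours_subset by blast
    then show ?thesis
      using closer_commute[OF closer[OF x]] y by blast
  qed
  then show ?thesis
    by (rule commute_via_common_neighbours[OF i j l adj p])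
qed

theorem theorem4p5:
  fixes d :: nat
    and u :: "nat list \<Rightarrow> nat list \<Rightarrow> 'a::cstar_algebra"
  assumes "qaut_rel (hamming_vertices d 3) (hamming_adj d 3) u"
  shows "\<forall>i\<in>hamming_vertices d 3. \<forall>j\<in>hamming_vertices d 3.
         \<forall>k\<in>hamming_vertices d 3. \<forall>l\<in>hamming_vertices d 3.
           u i j * u k l = u k l * u i j"
proof (intro ballI)
  interpret hamming3_qaut d u
    using assms by (rule hamming3_qaut.intro)
  fix i j k l
  assume i: "i \<in> hamming_vertices d 3" and j: "j \<in> hamming_vertices d 3"
  assume "k \<in> hamming_vertices d 3" "l \<in> hamming_vertices d 3"
  then show "u i j * u k l = u k l * u i j"
  proof (induction k arbitrary: l rule: measure_induct_rule[of "\<lambda>k. card (diff_coords d i k)"])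
    case (less k)
    consider "diff_coords d i k = {}" | "card (diff_coords d i k) = 1" | "2 \<le> card (diff_coords d i k)"
      using finite_diff_coords card_0_eq by (metis One_nat_def less_2_cases not_less)
    then show ?case
    proof cases
      case 1
      then have "i = k"
        using hamming_vertices_eqI[OF i less.prems(1)] unfolding diff_coords_def by blast
      then show ?thesis
        using row_orthogonal[OF i j less.prems(2)] row_orthogonal[OF i less.prems(2) j] by fastforce
    next
      case 2
      then have "hamming_adj d 3 i k"
        using i less.prems(1) unfolding hamming_adj_def diff_coords_def by blast
      then show ?thesis
        using commute_if_adj j less.prems(2) by blast
    next
      case 3
      then show ?thesis
        using commute_if_far[OF i j less.prems] less.IH by blast
    qed
  qed
qed

end
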